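(* For every $t=0,1,\dots,T-1$ and every $x\in\mathbb R$, $0\le v^\pi_t(x)-v_t(x)=V_t(x)-V^*_t(x)+\epsilon_t(x)$.
   Context: Model. Fix an integer horizon $T\ge 2$, a discount factor $\alpha\in(0,1]$, and for $t=0,\dots,T-1$: unit ordering costs $c_t\in\mathbb R$, a salvage coefficient $c_T\in\mathbb R$, setup costs $K_t\ge 0$, functions $G_t:\mathbb R\to\mathbb R$, and independent nonnegative random demands $D_0,\dots,D_{T-1}$ with right-continuous distribution functions $F_t$ and finite means; all expectations appearing are assumed finite. Let $\delta(z)=1$ for $z>0$, $\delta(0)=0$. Put $C_t(y)=(c_t-\alpha c_{t+1})y+G_t(y)+\alpha c_{t+1}E[D_t]$. Standing assumptions: (i) each $C_t$ is convex with $C_t(y)\to+\infty$ as $|y|\to\infty$; (ii) $K_t\ge \alpha K_{t+1}$ for $t=0,\dots,T-2$. Optimal costs: $v_T(x)=-c_Tx$ and $v_t(x)=\min_{y\ge x}\{K_t\delta(y-x)+c_t(y-x)+G_t(y)+\alpha E[v_{t+1}(y-D_t)]\}$; $V^*_t(x)=v_t(x)+c_tx$. Grid construction. Fix $\theta>0$, $z_m=m\theta$, $Z_\theta=\{z_m:m\in\mathbb Z\}$, $f_t(n)=F_t(z_{n+1})-F_t(z_n)$ ($n\ge -1$). $C^m_t=\min\{y: C_t(y)=\min_x C_t(x)\}$; with $z_{n_0}<C^m_t\le z_{n_0+1}$, $S^U_t=\min\{z_m\in Z_\theta: z_m\ge C^m_t,\ C_t(z_m)>C_t(z_{n_0})+K_t\}$.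 $s_{T-1}$ is a point with $s_{T-1}\le C^m_{T-1}$, $C_{T-1}(s_{T-1})=C_{T-1}(C^m_{T-1})+K_{T-1}$; $\bar I_{T-1}=s_{T-1}$. For $t=T-2,\dots,0$: $I_t=\max\{z_m\in Z_\theta: z_m<\min(\bar I_{t+1}-\theta,C^m_t)\}$, $\bar I_t=\max\{z_m\in Z_\theta: z_m\le I_t,\ C_t(z_m)>C_t(I_t)+K_t\}+\theta$. $H_{T-1}=C_{T-1}$, $S_{T-1}=C^m_{T-1}$; $V_t(y)=H_t(S_t)+K_t$ for $y<s_t$, $V_t(y)=H_t(y)$ for $y\ge s_t$. For $t=T-2,\dots,0$: $H_t(y)=C_t(y)+\alpha\sum_{n=-1}^\infty V_{t+1}(y-z_n)f_t(n)$; $S_t=\max\{z_m\in Z_\theta: I_t\le z_m\le S^U_t,\ H_t(z_m)=\min\{H_t(z_n):z_n\in Z_\theta, I_t\le z_n\le S^U_t\}\}$; $s_t=S_t$ if $K_t=0$, else $s_t=\min\{z_m\in Z_\theta:\bar I_t\le z_m\le S_t,\ H_t(z_m)\le H_t(S_t)+K_t\}$. Policy cost. $v^\pi_T(x)=-c_Tx$ and, for $t\le T-1$, with $y_t(x)=S_t$ if $x<s_t$ and $y_t(x)=x$ otherwise, $v^\pi_t(x)=K_t\delta(y_t(x)-x)+c_t(y_t(x)-x)+G_t(y_t(x))+\alpha E[v^\pi_{t+1}(y_t(x)-D_t)]$. Error terms. For $t=1,\dots,T-1$, $A_t(x)=E[V_t(x-D_{t-1})]-\sum_{n=-1}^{\infty}V_t(x-z_n)f_{t-1}(n)$.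 $\epsilon_{T-1}\equiv 0$; for $t=0,\dots,T-2$: $\epsilon_t(x)=\alpha A_{t+1}(S_t)+\alpha E[\epsilon_{t+1}(S_t-D_t)]$ if $x<s_t$, and $\epsilon_t(x)=\alpha A_{t+1}(x)+\alpha E[\epsilon_{t+1}(x-D_t)]$ if $x\ge s_t$. *)

theory Defs
  imports "HOL-Probability.Probability"
begin

definition delta :: "real \<Rightarrow> real" where
  "delta z = (if z > 0 then 1 else 0)"

definition Cfun :: "real \<Rightarrow> (nat \<Rightarrow> real) \<Rightarrow> (nat \<Rightarrow> real \<Rightarrow> real) \<Rightarrow> 'w measure
    \<Rightarrow> (nat \<Rightarrow> 'w \<Rightarrow> real) \<Rightarrow> nat \<Rightarrow> real \<Rightarrow> real" where
  "Cfun \<alpha> c G M D t y =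
     (c t - \<alpha> * c (Suc t)) * y + G t y + \<alpha> * c (Suc t) * integral\<^sup>L M (D t)"

text \<open>Optimal cost v_t, indexed by j = T - t (backward recursion); the minimum over
  y >= x is written as an infimum.\<close>
fun vopt_aux :: "nat \<Rightarrow> real \<Rightarrow> (nat \<Rightarrow> real) \<Rightarrow> (nat \<Rightarrow> real) \<Rightarrow> (nat \<Rightarrow> real \<Rightarrow> real)
    \<Rightarrow> 'w measure \<Rightarrow> (nat \<Rightarrow> 'w \<Rightarrow> real) \<Rightarrow> nat \<Rightarrow> real \<Rightarrow> real" where
  "vopt_aux T \<alpha> c K G M D 0 x = - c T * x"
| "vopt_aux T \<alpha> c K G M D (Suc j) x =
     (let t = T - Suc j in
      Inf {K t * delta (y - x) + c t * (y - x) + G t y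
           + \<alpha> * integral\<^sup>L M (\<lambda>\<omega>. vopt_aux T \<alpha> c K G M D j (y - D t \<omega>)) | y. y \<ge> x})"

definition vopt :: "nat \<Rightarrow> real \<Rightarrow> (nat \<Rightarrow> real) \<Rightarrow> (nat \<Rightarrow> real) \<Rightarrow> (nat \<Rightarrow> real \<Rightarrow> real)
    \<Rightarrow> 'w measure \<Rightarrow> (nat \<Rightarrow> 'w \<Rightarrow> real) \<Rightarrow> nat \<Rightarrow> real \<Rightarrow> real" where
  "vopt T \<alpha> c K G M D t = vopt_aux T \<alpha> c K G M D (T - t)"

definition Vstar :: "nat \<Rightarrow> real \<Rightarrow> (nat \<Rightarrow> real) \<Rightarrow> (nat \<Rightarrow> real) \<Rightarrow> (nat \<Rightarrow> real \<Rightarrow> real)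
    \<Rightarrow> 'w measure \<Rightarrow> (nat \<Rightarrow> 'w \<Rightarrow> real) \<Rightarrow> nat \<Rightarrow> real \<Rightarrow> real" where
  "Vstar T \<alpha> c K G M D t x = vopt T \<alpha> c K G M D t x + c t * x"

definition zg :: "real \<Rightarrow> int \<Rightarrow> real" where
  "zg \<theta> m = of_int m * \<theta>"

definition Fdist :: "'w measure \<Rightarrow> (nat \<Rightarrow> 'w \<Rightarrow> real) \<Rightarrow> nat \<Rightarrow> real \<Rightarrow> real" where
  "Fdist M D t z = measure M {\<omega> \<in> space M. D t \<omega> \<le> z}"

definition fgrid :: "'w measure \<Rightarrow> (nat \<Rightarrow> 'w \<Rightarrow> real) \<Rightarrow> real \<Rightarrow> nat \<Rightarrow> int \<Rightarrow> real" where
  "fgrid M D \<theta> t n = Fdist M D t (zg \<theta> (n + 1)) - Fdist M D t (zg \<theta> n)"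

text \<open>The grid sum  sum_{n=-1}^infinity V(y - z_n) f(n)  (index n = k - 1, k in nat).\<close>
definition gridE :: "real \<Rightarrow> (int \<Rightarrow> real) \<Rightarrow> (real \<Rightarrow> real) \<Rightarrow> real \<Rightarrow> real" where
  "gridE \<theta> f V y = (\<Sum>k. V (y - zg \<theta> (int k - 1)) * f (int k - 1))"

definition Cmin :: "(real \<Rightarrow> real) \<Rightarrow> real" where
  "Cmin C = Inf {y. C y = Inf (range C)}"

text \<open>S^U_t, with n_0 defined by z_{n_0} < C^m_t <= z_{n_0+1}.\<close>
definition SUp :: "real \<Rightarrow> (real \<Rightarrow> real) \<Rightarrow> real \<Rightarrow> real" where
  "SUp \<theta> C K =
     (let n0 = \<lceil>Cmin C / \<theta>\<rceil> - 1 in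
      zg \<theta> (LEAST m. zg \<theta> m \<ge> Cmin C \<and> C (zg \<theta> m) > C (zg \<theta> n0) + K))"

definition Igrid :: "real \<Rightarrow> real \<Rightarrow> real \<Rightarrow> real" where
  "Igrid \<theta> Ibn cm = zg \<theta> (GREATEST m. zg \<theta> m < min (Ibn - \<theta>) cm)"

definition Ibargrid :: "real \<Rightarrow> (real \<Rightarrow> real) \<Rightarrow> real \<Rightarrow> real \<Rightarrow> real" where
  "Ibargrid \<theta> C K I = zg \<theta> (GREATEST m. zg \<theta> m \<le> I \<and> C (zg \<theta> m) > C I + K) + \<theta>"

definition Vfun :: "(real \<Rightarrow> real) \<Rightarrow> real \<Rightarrow> real \<Rightarrow> real \<Rightarrow> real \<Rightarrow> real" where
  "Vfun H S s K y = (if y < s then H S + K else H y)"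

text \<open>Backward recursion for (H_t, S_t, s_t, Ibar_t), indexed by j = T - 1 - t.\<close>
fun gridrec :: "nat \<Rightarrow> real \<Rightarrow> (nat \<Rightarrow> real \<Rightarrow> real) \<Rightarrow> (nat \<Rightarrow> real) \<Rightarrow> (nat \<Rightarrow> int \<Rightarrow> real)
    \<Rightarrow> real \<Rightarrow> real \<Rightarrow> nat \<Rightarrow> (real \<Rightarrow> real) \<times> real \<times> real \<times> real" where
  "gridrec T \<alpha> C K f \<theta> sT 0 = (C (T - 1), Cmin (C (T - 1)), sT, sT)"
| "gridrec T \<alpha> C K f \<theta> sT (Suc j) =
     (case gridrec T \<alpha> C K f \<theta> sT j of (Hn, Sn, sn, Ibn) \<Rightarrow>
      (let t = T - 1 - Suc j;
           I = Igrid \<theta> Ibn (Cmin (C t));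
           Ib = Ibargrid \<theta> (C t) (K t) I;
           Vn = Vfun Hn Sn sn (K (Suc t));
           H = (\<lambda>y. C t y + \<alpha> * gridE \<theta> (f t) Vn y);
           SU = SUp \<theta> (C t) (K t);
           S = zg \<theta> (GREATEST m. I \<le> zg \<theta> m \<and> zg \<theta> m \<le> SU \<and>
                   (\<forall>n. I \<le> zg \<theta> n \<and> zg \<theta> n \<le> SU \<longrightarrow> H (zg \<theta> m) \<le> H (zg \<theta> n)));
           s = (if K t = 0 then S
                else zg \<theta> (LEAST m. Ib \<le> zg \<theta> m \<and> zg \<theta> m \<le> S \<and> H (zg \<theta> m) \<le> H S + K t))
       in (H, S, s, Ib)))"

definition Hg where "Hg T \<alpha> C K f \<theta> sT t = fst (gridrec T \<alpha> C K f \<theta> sT (T - 1 - t))"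
definition Sg where "Sg T \<alpha> C K f \<theta> sT t = fst (snd (gridrec T \<alpha> C K f \<theta> sT (T - 1 - t)))"
definition sg where "sg T \<alpha> C K f \<theta> sT t = fst (snd (snd (gridrec T \<alpha> C K f \<theta> sT (T - 1 - t))))"

definition Vg where
  "Vg T \<alpha> C K f \<theta> sT t y =
     Vfun (Hg T \<alpha> C K f \<theta> sT t) (Sg T \<alpha> C K f \<theta> sT t) (sg T \<alpha> C K f \<theta> sT t) (K t) y"

fun vpi_aux :: "nat \<Rightarrow> real \<Rightarrow> (nat \<Rightarrow> real) \<Rightarrow> (nat \<Rightarrow> real) \<Rightarrow> (nat \<Rightarrow> real \<Rightarrow> real)
    \<Rightarrow> 'w measure \<Rightarrow> (nat \<Rightarrow> 'w \<Rightarrow> real) \<Rightarrow> (nat \<Rightarrow> real) \<Rightarrow> (nat \<Rightarrow> real)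
    \<Rightarrow> nat \<Rightarrow> real \<Rightarrow> real" where
  "vpi_aux T \<alpha> c K G M D S s 0 x = - c T * x"
| "vpi_aux T \<alpha> c K G M D S s (Suc j) x =
     (let t = T - Suc j; y = (if x < s t then S t else x) in
      K t * delta (y - x) + c t * (y - x) + G t y
      + \<alpha> * integral\<^sup>L M (\<lambda>\<omega>. vpi_aux T \<alpha> c K G M D S s j (y - D t \<omega>)))"

definition vpi where
  "vpi T \<alpha> c K G M D S s t = vpi_aux T \<alpha> c K G M D S s (T - t)"

definition Aerr :: "'w measure \<Rightarrow> (nat \<Rightarrow> 'w \<Rightarrow> real) \<Rightarrow> real \<Rightarrow> (nat \<Rightarrow> int \<Rightarrow> real)
    \<Rightarrow> (nat \<Rightarrow> real \<Rightarrow> real) \<Rightarrow> nat \<Rightarrow> real \<Rightarrow> real" where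
  "Aerr M D \<theta> f V t x =
     integral\<^sup>L M (\<lambda>\<omega>. V t (x - D (t - 1) \<omega>)) - gridE \<theta> (f (t - 1)) (V t) x"

text \<open>epsilon_t, indexed by j = T - 1 - t.\<close>
fun eps_aux :: "nat \<Rightarrow> real \<Rightarrow> 'w measure \<Rightarrow> (nat \<Rightarrow> 'w \<Rightarrow> real) \<Rightarrow> real
    \<Rightarrow> (nat \<Rightarrow> int \<Rightarrow> real) \<Rightarrow> (nat \<Rightarrow> real \<Rightarrow> real) \<Rightarrow> (nat \<Rightarrow> real) \<Rightarrow> (nat \<Rightarrow> real)
    \<Rightarrow> nat \<Rightarrow> real \<Rightarrow> real" where
  "eps_aux T \<alpha> M D \<theta> f V S s 0 x = 0"
| "eps_aux T \<alpha> M D \<theta> f V S s (Suc j) x =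
     (let t = T - 1 - Suc j; y = (if x < s t then S t else x) in
      \<alpha> * Aerr M D \<theta> f V (Suc t) y
      + \<alpha> * integral\<^sup>L M (\<lambda>\<omega>. eps_aux T \<alpha> M D \<theta> f V S s j (y - D t \<omega>)))"

definition eps where
  "eps T \<alpha> M D \<theta> f V S s t = eps_aux T \<alpha> M D \<theta> f V S s (T - 1 - t)"

end

theory Submission
  imports Defs
begin

(* The policy cost obeys the same backward recursion as the optimal cost, except that the
   optimum takes the infimum over all order-up-to levels y >= x while the policy uses the
   particular level y_t(x) >= x; this level is admissible because s_t <= S_t, which the grid
   search windows guarantee. Since V*_t is bounded below, the infimum can be compared with
   this member, and v_t <= v^pi_t follows by backward induction.
   For the identity, v^pi_t(x) + c_t x = K_t delta(y - x) + C_t(y) + alpha E[W(y - D_t)] with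
   y = y_t(x) and W = v^pi_{t+1} + c_{t+1} id. By induction W = V_{t+1} + eps_{t+1}, and
   H_t contains the grid approximation of E[V_{t+1}(y - D_t)] instead of the expectation
   itself; the difference is exactly the term alpha A_{t+1}(y) of eps_t. *)

lemma int_GreatestI:
  fixes P :: "int \<Rightarrow> bool"
  assumes "P w" and bounded: "\<And>m. P m \<Longrightarrow> m \<le> B"
  shows "P (GREATEST m. P m)"
proof -
  define n where "n = (LEAST n. P (B - int n))"
  have "P (B - int n)"
    unfolding n_def by (rule LeastI[of _ "nat (B - w)"]) (use assms in auto)
  moreover have "m \<le> B - int n" if "P m" for m
    using Least_le[of "\<lambda>n. P (B - int n)" "nat (B - m)"] bounded[OF that] that
    unfolding n_def by auto
  ultimately show ?thesis
    by (metis Greatest_equality)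
qed

lemma int_LeastI:
  fixes P :: "int \<Rightarrow> bool"
  assumes "P w" and bounded: "\<And>m. P m \<Longrightarrow> B \<le> m"
  shows "P (LEAST m. P m)"
proof -
  define n where "n = (LEAST n. P (B + int n))"
  have "P (B + int n)"
    unfolding n_def by (rule LeastI[of _ "nat (w - B)"]) (use assms in auto)
  moreover have "B + int n \<le> m" if "P m" for m
    using Least_le[of "\<lambda>n. P (B + int n)" "nat (m - B)"] bounded[OF that] that
    unfolding n_def by auto
  ultimately show ?thesis
    by (metis Least_equality)
qed

lemma zg_le_zg_iff [simp]: "\<theta> > 0 \<Longrightarrow> zg \<theta> m \<le> zg \<theta> n \<longleftrightarrow> m \<le> n"
  by (simp add: zg_def)

lemma zg_add_one: "zg \<theta> (m + 1) = zg \<theta> m + \<theta>"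
  by (simp add: zg_def algebra_simps)

lemma zg_floor_le: "\<theta> > 0 \<Longrightarrow> zg \<theta> \<lfloor>y / \<theta>\<rfloor> \<le> y"
  unfolding zg_def by (metis floor_divide_lower)

lemma le_zg_ceiling: "\<theta> > 0 \<Longrightarrow> y \<le> zg \<theta> \<lceil>y / \<theta>\<rceil>"
  unfolding zg_def by (metis ceiling_divide_upper)

lemma zg_GreatestI:
  assumes "\<theta> > 0" "P (zg \<theta> w)" "\<And>x. P x \<Longrightarrow> x \<le> B"
  shows "P (zg \<theta> (GREATEST m. P (zg \<theta> m)))"
proof (rule int_GreatestI[of _ w "\<lfloor>B / \<theta>\<rfloor>"])
  fix m assume "P (zg \<theta> m)"
  then show "m \<le> \<lfloor>B / \<theta>\<rfloor>"
    using assms(1,3) by (simp add: zg_def le_floor_iff pos_le_divide_eq)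
qed (fact assms(2))

lemma zg_LeastI:
  assumes "\<theta> > 0" "P (zg \<theta> w)" "\<And>x. P x \<Longrightarrow> B \<le> x"
  shows "P (zg \<theta> (LEAST m. P (zg \<theta> m)))"
proof (rule int_LeastI[of _ w "\<lceil>B / \<theta>\<rceil>"])
  fix m assume "P (zg \<theta> m)"
  then show "\<lceil>B / \<theta>\<rceil> \<le> m"
    using assms(1,3) by (simp add: zg_def ceiling_le_iff pos_divide_le_eq)
qed (fact assms(2))

lemma Igrid_less:
  assumes "\<theta> > 0"
  shows "Igrid \<theta> Ibn cm < cm"
proof -
  define b where "b = min (Ibn - \<theta>) cm"
  have "zg \<theta> (\<lfloor>b / \<theta>\<rfloor> - 1) < b"
    using zg_floor_le[OF assms, of b] zg_add_one[of \<theta> "\<lfloor>b / \<theta>\<rfloor> - 1"] assms by simp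
  then have "zg \<theta> (GREATEST m. zg \<theta> m < b) < b"
    by (rule zg_GreatestI[OF assms, where B = b]) simp
  then show ?thesis
    unfolding Igrid_def b_def by simp
qed

lemma Ibargrid_le:
  assumes \<theta>: "\<theta> > 0" and "0 \<le> K" and coercive: "filterlim C at_top at_bot"
  shows "Ibargrid \<theta> C K (zg \<theta> k) \<le> zg \<theta> k"
proof -
  define P where "P x \<longleftrightarrow> x \<le> zg \<theta> k \<and> C (zg \<theta> k) + K < C x" for x
  obtain N where N: "\<And>y. y \<le> N \<Longrightarrow> C (zg \<theta> k) + K + 1 \<le> C y"
    using coercive unfolding filterlim_at_top eventually_at_bot_linorder by blast
  have "P (zg \<theta> \<lfloor>min N (zg \<theta> k) / \<theta>\<rfloor>)"
    using zg_floor_le[OF \<theta>, of "min N (zg \<theta> k)"] N unfolding P_def by fastforce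
  then have g: "P (zg \<theta> (GREATEST m. P (zg \<theta> m)))"
    by (rule zg_GreatestI[OF \<theta>, where B = "zg \<theta> k"]) (simp add: P_def)
  have "(GREATEST m. P (zg \<theta> m)) \<noteq> k"
    using g \<open>0 \<le> K\<close> unfolding P_def by force
  with g \<theta> have "(GREATEST m. P (zg \<theta> m)) + 1 \<le> k"
    unfolding P_def by simp
  with \<theta> show ?thesis
    unfolding Ibargrid_def P_def by (simp flip: zg_add_one)
qed

lemma Cmin_le_SUp:
  assumes \<theta>: "\<theta> > 0" and coercive: "filterlim C at_top at_top"
  shows "Cmin C \<le> SUp \<theta> C K"
proof -
  define n0 where "n0 = \<lceil>Cmin C / \<theta>\<rceil> - 1"
  define P where "P x \<longleftrightarrow> Cmin C \<le> x \<and> C (zg \<theta> n0) + K < C x" for x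
  obtain N where N: "\<And>y. N \<le> y \<Longrightarrow> C (zg \<theta> n0) + K + 1 \<le> C y"
    using coercive unfolding filterlim_at_top eventually_at_top_linorder by blast
  have "P (zg \<theta> \<lceil>max N (Cmin C) / \<theta>\<rceil>)"
    using le_zg_ceiling[OF \<theta>, of "max N (Cmin C)"] N unfolding P_def by fastforce
  then have "P (zg \<theta> (LEAST m. P (zg \<theta> m)))"
    by (rule zg_LeastI[OF \<theta>, where B = "Cmin C"]) (simp add: P_def)
  then show ?thesis
    unfolding SUp_def P_def n0_def Let_def by simp
qed

lemma le_Greatest_grid_argmin:
  fixes H :: "real \<Rightarrow> 'a::linorder"
  assumes \<theta>: "\<theta> > 0" and "zg \<theta> a \<le> SU"
  shows "zg \<theta> a \<le> zg \<theta> (GREATEST m. zg \<theta> a \<le> zg \<theta> m \<and> zg \<theta> m \<le> SU \<and>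
           (\<forall>n. zg \<theta> a \<le> zg \<theta> n \<and> zg \<theta> n \<le> SU \<longrightarrow> H (zg \<theta> m) \<le> H (zg \<theta> n)))"
proof -
  define A where "A = {n. zg \<theta> a \<le> zg \<theta> n \<and> zg \<theta> n \<le> SU}"
  define ms where "ms = arg_min_on (\<lambda>n. H (zg \<theta> n)) A"
  have "A \<subseteq> {a..\<lfloor>SU / \<theta>\<rfloor>}"
    using \<theta> by (auto simp: A_def zg_def le_floor_iff pos_le_divide_eq)
  then have fin: "finite A"
    by (rule finite_subset) simp
  have "a \<in> A"
    using assms by (simp add: A_def)
  then have "ms \<in> A" "\<And>n. n \<in> A \<Longrightarrow> H (zg \<theta> ms) \<le> H (zg \<theta> n)"
    using arg_min_if_finite(1)[OF fin] arg_min_least[OF fin, of _ "\<lambda>n. H (zg \<theta> n)"]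
    unfolding ms_def by auto
  then have "zg \<theta> a \<le> zg \<theta> ms \<and> zg \<theta> ms \<le> SU \<and>
      (\<forall>n. zg \<theta> a \<le> zg \<theta> n \<and> zg \<theta> n \<le> SU \<longrightarrow> H (zg \<theta> ms) \<le> H (zg \<theta> n))"
    by (simp add: A_def)
  then show ?thesis
    by (rule zg_GreatestI[OF \<theta>, where B = SU, THEN conjunct1]) simp
qed

lemma gridrec_s_le_S:
  fixes T j :: nat
  defines "t \<equiv> T - 1 - Suc j"
  assumes \<theta>: "\<theta> > 0" and K: "0 \<le> K t"
    and top: "filterlim (C t) at_top at_top" and bot: "filterlim (C t) at_top at_bot"
  shows "fst (snd (snd (gridrec T \<alpha> C K f \<theta> sT (Suc j))))
           \<le> fst (snd (gridrec T \<alpha> C K f \<theta> sT (Suc j)))"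
proof -
  obtain Hn Sn sn Ibn where rec: "gridrec T \<alpha> C K f \<theta> sT j = (Hn, Sn, sn, Ibn)"
    by (metis prod_cases4)
  define I where "I = Igrid \<theta> Ibn (Cmin (C t))"
  define Ib where "Ib = Ibargrid \<theta> (C t) (K t) I"
  define SU where "SU = SUp \<theta> (C t) (K t)"
  define H where "H = (\<lambda>y. C t y + \<alpha> * gridE \<theta> (f t) (Vfun Hn Sn sn (K (Suc t))) y)"
  define S where "S = zg \<theta> (GREATEST m. I \<le> zg \<theta> m \<and> zg \<theta> m \<le> SU \<and>
                   (\<forall>n. I \<le> zg \<theta> n \<and> zg \<theta> n \<le> SU \<longrightarrow> H (zg \<theta> m) \<le> H (zg \<theta> n)))"
  obtain a where a: "I = zg \<theta> a"
    unfolding I_def Igrid_def by blast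
  have "I \<le> SU"
    using Igrid_less[OF \<theta>] Cmin_le_SUp[OF \<theta> top] unfolding I_def SU_def by (metis less_imp_le order_trans)
  then have "I \<le> S"
    unfolding S_def a by (rule le_Greatest_grid_argmin[OF \<theta>])
  moreover have "Ib \<le> I"
    unfolding Ib_def a by (rule Ibargrid_le[OF \<theta> K bot])
  \<comment> \<open>so \<open>S\<close> itself passes the test defining \<open>s\<close>\<close>
  ultimately have "zg \<theta> (LEAST m. Ib \<le> zg \<theta> m \<and> zg \<theta> m \<le> S \<and> H (zg \<theta> m) \<le> H S + K t) \<le> S"
    using zg_LeastI[OF \<theta>, of "\<lambda>x. Ib \<le> x \<and> x \<le> S \<and> H x \<le> H S + K t"] K
    unfolding S_def by fastforce
  moreover have "gridrec T \<alpha> C K f \<theta> sT (Suc j) = (H, S,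
      if K t = 0 then S else zg \<theta> (LEAST m. Ib \<le> zg \<theta> m \<and> zg \<theta> m \<le> S \<and> H (zg \<theta> m) \<le> H S + K t), Ib)"
    by (simp only: gridrec.simps rec prod.case Let_def t_def I_def Ib_def SU_def H_def S_def)
  ultimately show ?thesis
    by simp
qed

lemma sg_le_Sg:
  assumes "\<theta> > 0" "t < T" "0 \<le> K t"
    and "filterlim (C t) at_top at_top" "filterlim (C t) at_top at_bot"
    and "sT \<le> Cmin (C (T - 1))"
  shows "sg T \<alpha> C K f \<theta> sT t \<le> Sg T \<alpha> C K f \<theta> sT t"
proof (cases "t = T - 1")
  case True
  then show ?thesis
    using assms(6) by (simp add: sg_def Sg_def)
next
  case False
  with \<open>t < T\<close> have j: "T - 1 - t = Suc (T - 2 - t)" and t: "T - 1 - Suc (T - 2 - t) = t"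
    by auto
  show ?thesis
    unfolding sg_def Sg_def j by (rule gridrec_s_le_S) (use assms t in simp_all)
qed

lemma Hg_last: "Hg T \<alpha> C K f \<theta> sT (T - 1) = C (T - 1)"
  by (simp add: Hg_def)

lemma Hg_step:
  assumes "t + 2 \<le> T"
  shows "Hg T \<alpha> C K f \<theta> sT t = (\<lambda>y. C t y + \<alpha> * gridE \<theta> (f t) (Vg T \<alpha> C K f \<theta> sT (Suc t)) y)"
proof -
  define j where "j = T - 2 - t"
  have j: "T - 1 - t = Suc j" "T - 1 - Suc t = j" and t: "T - 1 - Suc j = t"
    using assms unfolding j_def by auto
  obtain Hn Sn sn Ibn where rec: "gridrec T \<alpha> C K f \<theta> sT j = (Hn, Sn, sn, Ibn)"
    by (metis prod_cases4)
  have "Vg T \<alpha> C K f \<theta> sT (Suc t) = Vfun Hn Sn sn (K (Suc t))"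
    unfolding Vg_def Hg_def Sg_def sg_def j(2) rec by simp
  then show ?thesis
    unfolding Hg_def j(1) by (simp only: gridrec.simps rec prod.case Let_def t fst_conv)
qed

lemma coercive_continuous_bdd_below:
  fixes g :: "real \<Rightarrow> real"
  assumes "continuous_on UNIV g" "filterlim g at_top at_top" "filterlim g at_top at_bot"
  shows "bdd_below (range g)"
proof -
  obtain N1 where N1: "\<And>y. N1 \<le> y \<Longrightarrow> 0 \<le> g y"
    using assms(2) unfolding filterlim_at_top eventually_at_top_linorder by blast
  obtain N2 where N2: "\<And>y. y \<le> N2 \<Longrightarrow> 0 \<le> g y"
    using assms(3) unfolding filterlim_at_top eventually_at_bot_linorder by blast
  have "g y \<in> g ` {N2..N1} \<union> {0..}" for y
  proof (cases "N2 \<le> y \<and> y \<le> N1")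
    case False
    then have "N1 \<le> y \<or> y \<le> N2"
      by auto
    then show ?thesis
      using N1 N2 by auto
  qed simp
  then have "range g \<subseteq> g ` {N2..N1} \<union> {0..}"
    by auto
  moreover have "bdd_below (g ` {N2..N1})"
    by (intro bounded_imp_bdd_below compact_imp_bounded compact_continuous_image
        continuous_on_subset[OF assms(1)]) auto
  ultimately show ?thesis
    by (meson bdd_below_mono bdd_below_Un bdd_below_Ici)
qed

definition order_up_to :: "real \<Rightarrow> real \<Rightarrow> real \<Rightarrow> real" where
  "order_up_to S s x = (if x < s then S else x)"

lemma order_up_to_ge: "s \<le> S \<Longrightarrow> x \<le> order_up_to S s x"
  by (simp add: order_up_to_def)

lemma delta_nonneg: "0 \<le> delta z"
  by (simp add: delta_def)

lemma Vfun_order_up_to: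
  "s \<le> S \<Longrightarrow> Vfun H S s K x = K * delta (order_up_to S s x - x) + H (order_up_to S s x)"
  by (simp add: Vfun_def order_up_to_def delta_def)

locale inventory_model = prob_space M
  for M :: "'w measure" and T :: nat and \<alpha> :: real and c K :: "nat \<Rightarrow> real"
    and G :: "nat \<Rightarrow> real \<Rightarrow> real" and D :: "nat \<Rightarrow> 'w \<Rightarrow> real" +
  assumes alpha_nonneg: "0 \<le> \<alpha>"
    and K_nonneg: "t < T \<Longrightarrow> 0 \<le> K t"
    and D_integrable: "t < T \<Longrightarrow> integrable M (D t)"
begin

abbreviation "C \<equiv> Cfun \<alpha> c G M D"
abbreviation "v \<equiv> vopt T \<alpha> c K G M D"
abbreviation "vp \<equiv> vpi T \<alpha> c K G M D"

definition order_cost :: "nat \<Rightarrow> (real \<Rightarrow> real) \<Rightarrow> real \<Rightarrow> real \<Rightarrow> real" where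
  "order_cost t w x y = K t * delta (y - x) + c t * (y - x) + G t y + \<alpha> * (\<integral>\<omega>. w (y - D t \<omega>) \<partial>M)"

lemma vopt_T: "v T x = - c T * x"
  by (simp add: vopt_def)

lemma vopt_Suc:
  assumes "t < T"
  shows "v t x = Inf (order_cost t (v (Suc t)) x ` {x..})"
proof -
  have "T - t = Suc (T - Suc t)" "T - Suc (T - Suc t) = t"
    using assms by auto
  then show ?thesis
    by (simp add: vopt_def order_cost_def setcompr_eq_image atLeast_def)
qed

lemma vpi_T: "vp S s T x = - c T * x"
  by (simp add: vpi_def)

lemma vpi_Suc:
  assumes "t < T"
  shows "vp S s t x = order_cost t (vp S s (Suc t)) x (order_up_to (S t) (s t) x)"
proof -
  have "T - t = Suc (T - Suc t)" "T - Suc (T - Suc t) = t"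
    using assms by auto
  then show ?thesis
    by (simp add: vpi_def order_cost_def order_up_to_def Let_def)
qed

lemma order_cost_eq:
  assumes "t < T" "integrable M (\<lambda>\<omega>. w (y - D t \<omega>))"
  shows "order_cost t w x y = K t * delta (y - x) + C t y - c t * x
           + \<alpha> * (\<integral>\<omega>. w (y - D t \<omega>) + c (Suc t) * (y - D t \<omega>) \<partial>M)"
proof -
  have "(\<integral>\<omega>. w (y - D t \<omega>) + c (Suc t) * (y - D t \<omega>) \<partial>M)
      = (\<integral>\<omega>. w (y - D t \<omega>) \<partial>M) + (\<integral>\<omega>. c (Suc t) * (y - D t \<omega>) \<partial>M)"
    by (rule Bochner_Integration.integral_add) (use assms D_integrable[OF assms(1)] in auto)
  also have "(\<integral>\<omega>. c (Suc t) * (y - D t \<omega>) \<partial>M) = c (Suc t) * y - c (Suc t) * expectation (D t)"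
    using D_integrable[OF assms(1)] by (simp add: right_diff_distrib prob_space)
  finally have E: "(\<integral>\<omega>. w (y - D t \<omega>) + c (Suc t) * (y - D t \<omega>) \<partial>M)
      = (\<integral>\<omega>. w (y - D t \<omega>) \<partial>M) + (c (Suc t) * y - c (Suc t) * expectation (D t))" .
  show ?thesis
    unfolding order_cost_def Cfun_def E by (simp add: algebra_simps)
qed

lemma order_cost_mono:
  assumes "integrable M (\<lambda>\<omega>. w (y - D t \<omega>))" "integrable M (\<lambda>\<omega>. w' (y - D t \<omega>))"
    and "\<And>z. w z \<le> w' z"
  shows "order_cost t w x y \<le> order_cost t w' x y"
proof -
  have "(\<integral>\<omega>. w (y - D t \<omega>) \<partial>M) \<le> (\<integral>\<omega>. w' (y - D t \<omega>) \<partial>M)"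
    using assms by (intro integral_mono) auto
  then show ?thesis
    unfolding order_cost_def using alpha_nonneg by (simp add: mult_left_mono)
qed

lemma order_cost_bdd_below:
  assumes "t < T" "bdd_below (range (C t))" "bdd_below (range (\<lambda>z. w z + c (Suc t) * z))"
    and "\<And>y. integrable M (\<lambda>\<omega>. w (y - D t \<omega>))"
  shows "\<exists>b. \<forall>x y. b - c t * x \<le> order_cost t w x y"
proof -
  obtain b where b: "\<And>y. b \<le> C t y"
    using assms(2) by (auto simp: bdd_below_def)
  obtain m where m: "\<And>z. m \<le> w z + c (Suc t) * z"
    using assms(3) by (auto simp: bdd_below_def)
  have "b + \<alpha> * m - c t * x \<le> order_cost t w x y" for x y
  proof -
    have "m \<le> (\<integral>\<omega>. w (y - D t \<omega>) + c (Suc t) * (y - D t \<omega>) \<partial>M)"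
      using assms(1,4) D_integrable m by (intro integral_ge_const) auto
    then have "\<alpha> * m \<le> \<alpha> * (\<integral>\<omega>. w (y - D t \<omega>) + c (Suc t) * (y - D t \<omega>) \<partial>M)"
      using alpha_nonneg by (rule mult_left_mono)
    moreover have "0 \<le> K t * delta (y - x)"
      using K_nonneg[OF assms(1)] delta_nonneg by simp
    ultimately show ?thesis
      using order_cost_eq[OF assms(1,4), of x y] b[of y] by linarith
  qed
  then show ?thesis
    by (intro exI[of _ "b + \<alpha> * m"]) blast
qed

lemma Vstar_eq: "Vstar T \<alpha> c K G M D t = (\<lambda>z. v t z + c t * z)"
  by (simp add: Vstar_def fun_eq_iff)

lemma Vstar_bdd_below:
  assumes C_bdd: "\<And>t. t < T \<Longrightarrow> bdd_below (range (C t))"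
    and v_int: "\<And>t y. t < T \<Longrightarrow> integrable M (\<lambda>\<omega>. v (Suc t) (y - D t \<omega>))"
    and "t \<le> T"
  shows "bdd_below (range (Vstar T \<alpha> c K G M D t))"
  using \<open>t \<le> T\<close>
proof (induction t rule: inc_induct)
  case base
  show ?case
    by (simp add: Vstar_def vopt_T)
next
  case (step t)
  have "bdd_below (range (\<lambda>z. v (Suc t) z + c (Suc t) * z))"
    using step.IH by (simp add: Vstar_eq)
  then obtain b where b: "\<And>x y. b - c t * x \<le> order_cost t (v (Suc t)) x y"
    using order_cost_bdd_below[OF step.hyps(2) C_bdd[OF step.hyps(2)]] v_int[OF step.hyps(2)] by blast
  have "b \<le> Vstar T \<alpha> c K G M D t x" for x
  proof -
    have "b - c t * x \<le> v t x"
      unfolding vopt_Suc[OF step.hyps(2)] by (rule cINF_greatest) (use b in auto)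
    then show ?thesis
      by (simp add: Vstar_def)
  qed
  then show ?case
    by (rule bdd_belowI2)
qed

lemma vopt_le_vpi:
  assumes C_bdd: "\<And>t. t < T \<Longrightarrow> bdd_below (range (C t))"
    and v_int: "\<And>t y. t < T \<Longrightarrow> integrable M (\<lambda>\<omega>. v (Suc t) (y - D t \<omega>))"
    and vp_int: "\<And>t y. t < T \<Longrightarrow> integrable M (\<lambda>\<omega>. vp S s (Suc t) (y - D t \<omega>))"
    and s_le_S: "\<And>t. t < T \<Longrightarrow> s t \<le> S t"
    and "t \<le> T"
  shows "v t x \<le> vp S s t x"
  using \<open>t \<le> T\<close>
proof (induction t arbitrary: x rule: inc_induct)
  case base
  show ?case
    by (simp add: vopt_T vpi_T)
next
  case (step t)
  let ?y = "order_up_to (S t) (s t) x"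
  have "bdd_below (range (\<lambda>z. v (Suc t) z + c (Suc t) * z))"
    using Vstar_bdd_below[OF C_bdd v_int, of "Suc t"] step.hyps by (simp add: Vstar_eq)
  then obtain b where b: "\<And>x y. b - c t * x \<le> order_cost t (v (Suc t)) x y"
    using order_cost_bdd_below[OF step.hyps(2) C_bdd[OF step.hyps(2)]] v_int[OF step.hyps(2)] by blast
  then have "bdd_below (order_cost t (v (Suc t)) x ` {x..})"
    by (intro bdd_belowI2) blast
  then have "v t x \<le> order_cost t (v (Suc t)) x ?y"
    unfolding vopt_Suc[OF step.hyps(2)]
    by (rule cINF_lower) (simp add: order_up_to_ge s_le_S step.hyps(2))
  also have "\<dots> \<le> order_cost t (vp S s (Suc t)) x ?y"
    by (rule order_cost_mono) (use v_int vp_int step.hyps(2) step.IH in auto)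
  also have "\<dots> = vp S s t x"
    by (simp add: vpi_Suc step.hyps(2))
  finally show ?case .
qed

lemma vpi_plus_linear_Suc:
  assumes "t < T" "\<And>y. integrable M (\<lambda>\<omega>. vp S s (Suc t) (y - D t \<omega>))"
  fixes x :: real
  defines "y \<equiv> order_up_to (S t) (s t) x"
  shows "vp S s t x + c t * x = K t * delta (y - x) + C t y
           + \<alpha> * (\<integral>\<omega>. vp S s (Suc t) (y - D t \<omega>) + c (Suc t) * (y - D t \<omega>) \<partial>M)"
  using order_cost_eq[OF assms(1,2)] unfolding vpi_Suc[OF assms(1)] y_def by simp

end

locale grid_policy = inventory_model +
  fixes \<theta> sT :: real
begin

abbreviation "f \<equiv> fgrid M D \<theta>"
abbreviation "H \<equiv> Hg T \<alpha> C K f \<theta> sT"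
abbreviation "S \<equiv> Sg T \<alpha> C K f \<theta> sT"
abbreviation "s \<equiv> sg T \<alpha> C K f \<theta> sT"
abbreviation "V \<equiv> Vg T \<alpha> C K f \<theta> sT"
abbreviation "\<epsilon> \<equiv> eps T \<alpha> M D \<theta> f V S s"

lemma Vg_order_up_to:
  "s t \<le> S t \<Longrightarrow> V t x = K t * delta (order_up_to (S t) (s t) x - x) + H t (order_up_to (S t) (s t) x)"
  by (simp add: Vg_def Vfun_order_up_to)

lemma eps_last: "\<epsilon> (T - 1) x = 0"
  by (simp add: eps_def)

lemma eps_Suc:
  assumes "t + 2 \<le> T"
  fixes x :: real
  defines "y \<equiv> order_up_to (S t) (s t) x"
  shows "\<epsilon> t x = \<alpha> * ((\<integral>\<omega>. V (Suc t) (y - D t \<omega>) \<partial>M) - gridE \<theta> (f t) (V (Suc t)) y)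
           + \<alpha> * (\<integral>\<omega>. \<epsilon> (Suc t) (y - D t \<omega>) \<partial>M)"
proof -
  have "T - 1 - t = Suc (T - 1 - Suc t)" "T - 1 - Suc (T - 1 - Suc t) = t"
    using assms by auto
  then show ?thesis
    unfolding eps_def y_def by (simp add: Aerr_def order_up_to_def Let_def)
qed

lemma vpi_plus_linear_eq:
  assumes s_le_S: "\<And>t. t < T \<Longrightarrow> s t \<le> S t"
    and vp_int: "\<And>t y. t < T \<Longrightarrow> integrable M (\<lambda>\<omega>. vp S s (Suc t) (y - D t \<omega>))"
    and V_int: "\<And>t y. t + 2 \<le> T \<Longrightarrow> integrable M (\<lambda>\<omega>. V (Suc t) (y - D t \<omega>))"
    and eps_int: "\<And>t y. t + 2 \<le> T \<Longrightarrow> integrable M (\<lambda>\<omega>. \<epsilon> (Suc t) (y - D t \<omega>))"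
    and "t < T"
  shows "vp S s t x + c t * x = V t x + \<epsilon> t x"
proof -
  have "t \<le> T - 1"
    using \<open>t < T\<close> by simp
  then show ?thesis
  proof (induction t arbitrary: x rule: inc_induct)
    case base
    let ?y = "order_up_to (S (T - 1)) (s (T - 1)) x"
    have T: "T - 1 < T" "Suc (T - 1) = T"
      using \<open>t < T\<close> by auto
    have "vp S s (T - 1) x + c (T - 1) * x = K (T - 1) * delta (?y - x) + C (T - 1) ?y"
      using vpi_plus_linear_Suc[OF T(1) vp_int[OF T(1)], of x] unfolding T(2) vpi_T by simp
    moreover have "V (T - 1) x = K (T - 1) * delta (?y - x) + C (T - 1) ?y"
      using Vg_order_up_to[OF s_le_S[OF T(1)], of x] unfolding Hg_last .
    ultimately show ?case
      unfolding eps_last by simp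
  next
    case (step t)
    let ?y = "order_up_to (S t) (s t) x"
    have t: "t < T" "t + 2 \<le> T"
      using step.hyps by auto
    have "(\<integral>\<omega>. vp S s (Suc t) (?y - D t \<omega>) + c (Suc t) * (?y - D t \<omega>) \<partial>M)
        = (\<integral>\<omega>. V (Suc t) (?y - D t \<omega>) \<partial>M) + (\<integral>\<omega>. \<epsilon> (Suc t) (?y - D t \<omega>) \<partial>M)"
      using V_int[OF t(2)] eps_int[OF t(2)] by (simp add: step.IH)
    then show ?case
      using vpi_plus_linear_Suc[OF t(1) vp_int[OF t(1)], of x] Vg_order_up_to[OF s_le_S[OF t(1)], of x]
        eps_Suc[OF t(2), of x] Hg_step[OF t(2)]
      by (simp add: algebra_simps)
  qed
qed

end

theorem theorem4p1:
  fixes T :: nat and \<alpha> \<theta> sT :: real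
    and c K :: "nat \<Rightarrow> real" and G :: "nat \<Rightarrow> real \<Rightarrow> real"
    and M :: "'w measure" and D :: "nat \<Rightarrow> 'w \<Rightarrow> real"
  defines "C \<equiv> Cfun \<alpha> c G M D"
    and "f \<equiv> fgrid M D \<theta>"
    and "V \<equiv> Vg T \<alpha> (Cfun \<alpha> c G M D) K (fgrid M D \<theta>) \<theta> sT"
    and "S \<equiv> Sg T \<alpha> (Cfun \<alpha> c G M D) K (fgrid M D \<theta>) \<theta> sT"
    and "s \<equiv> sg T \<alpha> (Cfun \<alpha> c G M D) K (fgrid M D \<theta>) \<theta> sT"
    and "v \<equiv> vopt T \<alpha> c K G M D"
    and "vp \<equiv> vpi T \<alpha> c K G M D (Sg T \<alpha> (Cfun \<alpha> c G M D) K (fgrid M D \<theta>) \<theta> sT) (sg T \<alpha> (Cfun \<alpha> c G M D) K (fgrid M D \<theta>) \<theta> sT)"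
    and "\<epsilon> \<equiv> eps T \<alpha> M D \<theta> (fgrid M D \<theta>) (Vg T \<alpha> (Cfun \<alpha> c G M D) K (fgrid M D \<theta>) \<theta> sT) (Sg T \<alpha> (Cfun \<alpha> c G M D) K (fgrid M D \<theta>) \<theta> sT) (sg T \<alpha> (Cfun \<alpha> c G M D) K (fgrid M D \<theta>) \<theta> sT)"
  assumes T2: "T \<ge> 2"
    and alpha: "0 < \<alpha>" "\<alpha> \<le> 1"
    and theta: "\<theta> > 0"
    and K_nonneg: "\<forall>t<T. K t \<ge> 0"
    and K_dec: "\<forall>t. t + 2 \<le> T \<longrightarrow> K t \<ge> \<alpha> * K (Suc t)"
    and M_prob: "prob_space M"
    and D_rv: "\<forall>t<T. D t \<in> borel_measurable M"
    and D_indep: "prob_space.indep_vars M (\<lambda>_. borel) D {..<T}"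
    and D_nonneg: "\<forall>t<T. \<forall>\<omega>\<in>space M. D t \<omega> \<ge> 0"
    and D_mean: "\<forall>t<T. integrable M (D t)"
    and C_convex: "\<forall>t<T. convex_on UNIV (C t)"
    and C_coercive: "\<forall>t<T. filterlim (C t) at_top at_top \<and> filterlim (C t) at_top at_bot"
    and sT_le: "sT \<le> Cmin (C (T - 1))"
    and sT_eq: "C (T - 1) sT = C (T - 1) (Cmin (C (T - 1))) + K (T - 1)"
    and fin_v: "\<forall>t<T. \<forall>y. integrable M (\<lambda>\<omega>. v (Suc t) (y - D t \<omega>))"
    and fin_vp: "\<forall>t<T. \<forall>y. integrable M (\<lambda>\<omega>. vp (Suc t) (y - D t \<omega>))"
    and fin_V: "\<forall>t. 1 \<le> t \<and> t < T \<longrightarrow> (\<forall>x. integrable M (\<lambda>\<omega>. V t (x - D (t - 1) \<omega>)))"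
    and fin_eps: "\<forall>t. t + 2 \<le> T \<longrightarrow> (\<forall>x. integrable M (\<lambda>\<omega>. \<epsilon> (Suc t) (x - D t \<omega>)))"
    and fin_grid: "\<forall>t. t + 2 \<le> T \<longrightarrow>
         (\<forall>y. summable (\<lambda>k. V (Suc t) (y - zg \<theta> (int k - 1)) * f t (int k - 1)))"
  shows "\<forall>t<T. \<forall>x.
           0 \<le> vp t x - v t x \<and>
           vp t x - v t x = V t x - Vstar T \<alpha> c K G M D t x + \<epsilon> t x"
proof (intro allI impI)
  fix t x
  assume "t < T"
  interpret P: grid_policy M T \<alpha> c K G D \<theta> sT
    unfolding grid_policy_def inventory_model_def inventory_model_axioms_def
    using M_prob alpha K_nonneg D_mean by simp
  have C_bdd: "bdd_below (range (C t))" if "t < T" for t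
    using C_convex C_coercive that by (simp add: coercive_continuous_bdd_below convex_on_continuous)
  have s_le_S: "s t \<le> S t" if "t < T" for t
    unfolding s_def S_def
    using sg_le_Sg[OF theta that] K_nonneg C_coercive sT_le that by (simp add: C_def)
  have V_int: "integrable M (\<lambda>\<omega>. V (Suc t) (y - D t \<omega>))" if "t + 2 \<le> T" for t y
    using fin_V[rule_format, of "Suc t" y] that by simp
  have "v t x \<le> vp t x"
    using P.vopt_le_vpi[OF C_bdd[unfolded C_def] fin_v[rule_format, unfolded v_def]
        fin_vp[rule_format, unfolded vp_def] s_le_S[unfolded s_def S_def]] \<open>t < T\<close>
    unfolding v_def vp_def by simp
  moreover have "vp t x + c t * x = V t x + \<epsilon> t x"
    using P.vpi_plus_linear_eq[OF s_le_S[unfolded s_def S_def] fin_vp[rule_format, unfolded vp_def]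
        V_int[unfolded V_def] fin_eps[rule_format, unfolded \<epsilon>_def] \<open>t < T\<close>]
    unfolding vp_def V_def \<epsilon>_def by simp
  ultimately show "0 \<le> vp t x - v t x \<and> vp t x - v t x = V t x - Vstar T \<alpha> c K G M D t x + \<epsilon> t x"
    by (simp add: Vstar_def v_def)
qed

end
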